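(* Let $n$ be a nonzero integer and let $\{a,b,c,d\}$ be a set of positive integers with the property $D(n)$ such that $|n|^3\le a<b<c<d$. Then \[ d>\frac{3.847\,bc}{n^2}. \]
   Context: A set of positive integers $S$ has the property $D(n)$ if $xy+n$ is a perfect square for all distinct $x,y\in S$. *)

theory Defs
  imports Complex_Main
begin

definition is_square :: "int \<Rightarrow> bool" where
  "is_square m \<longleftrightarrow> (\<exists>k::int. m = k^2)"

definition has_D :: "int \<Rightarrow> int set \<Rightarrow> bool" where
  "has_D n S \<longleftrightarrow> (\<forall>x\<in>S. x > 0) \<and> (\<forall>x\<in>S. \<forall>y\<in>S. x \<noteq> y \<longrightarrow> is_square (x*y + n))"

end

theory Submission
  imports Defs
begin

text \<open>Let \<open>t, y, z\<close> be the square roots of \<open>bc + n, bd + n, cd + n\<close> and put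
  \<open>M = n(b + c + d) + 2bcd\<close>. Then \<open>b(M - 2tyz) + n\<^sup>2\<close> is a square, so \<open>2tyz \<le> M\<close> as soon as
  \<open>n\<^sup>2 < b\<close>, while \<open>M\<^sup>2 - 4(tyz)\<^sup>2 = n\<^sup>2((d - b - c)\<^sup>2 - 4(bc + n))\<close> shows that equality forces
  \<open>d = b + c \<plusminus> 2t\<close>. Only \<open>d = b + c + 2t\<close> is compatible with \<open>c < d\<close>, and it is excluded by \<open>a\<close>:
  with \<open>r, s\<close> the roots of \<open>ab + n, ac + n\<close>, the number \<open>ad + n\<close> lies strictly between
  \<open>(r + s - 1)\<^sup>2\<close> and \<open>(r + s + 1)\<^sup>2\<close> but differs from \<open>(r + s)\<^sup>2\<close>. Hence \<open>2tyz \<le> M - 1\<close>, and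
  squaring gives \<open>4bcd \<le> n\<^sup>2d\<^sup>2 + 1\<close>, which is the claim up to the constant.\<close>

lemma is_square_nonneg_root:
  assumes "is_square m"
  obtains k :: int where "0 \<le> k" "m = k\<^sup>2"
proof -
  from assms obtain k where "m = k\<^sup>2" by (auto simp: is_square_def)
  then show thesis by (intro that[of "\<bar>k\<bar>"]) simp_all
qed

lemma abs_le_power2_int:
  fixes n :: int
  shows "\<bar>n\<bar> \<le> n\<^sup>2"
proof (cases "n = 0")
  case False
  then have "\<bar>n\<bar> * 1 \<le> \<bar>n\<bar> * \<bar>n\<bar>" by (intro mult_left_mono) auto
  then show ?thesis by (simp add: power2_eq_square abs_mult_self_eq)
qed simp

lemma square_between_consecutive_squares:
  fixes q x :: int
  assumes "0 \<le> q" and "(q - 1)\<^sup>2 < x\<^sup>2" and "x\<^sup>2 < (q + 1)\<^sup>2"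
  shows "x\<^sup>2 = q\<^sup>2"
proof -
  have "\<bar>q - 1\<bar> < \<bar>x\<bar>" and "\<bar>x\<bar> < \<bar>q + 1\<bar>"
    using assms(2,3) by (meson abs_le_square_iff not_le)+
  then have "\<bar>x\<bar> = q" using assms(1) by linarith
  then show ?thesis by (metis power2_abs)
qed

lemma D_pair_root_ge:
  fixes n x y w :: int
  assumes "\<bar>n\<bar> \<le> x" and "x < y" and "x * y + n = w\<^sup>2" and "0 \<le> w"
  shows "x \<le> w"
proof (rule power2_le_imp_le)
  have "x * (x + 1) \<le> x * y" using assms(1,2) by (intro mult_left_mono) auto
  then show "x\<^sup>2 \<le> w\<^sup>2" using assms(1,3) by (simp add: power2_eq_square algebra_simps)
qed (fact assms(4))

lemma regular_extension_defect:
  fixes n a b c r s t :: int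
  assumes n0: "n \<noteq> 0" and na: "\<bar>n\<bar> \<le> a" and ab: "a < b" and bc: "b < c"
    and r: "a * b + n = r\<^sup>2" and s: "a * c + n = s\<^sup>2" and t: "b * c + n = t\<^sup>2"
    and r0: "0 \<le> r" and s0: "0 \<le> s" and t0: "0 \<le> t"
  shows "\<bar>2 * (a * t - r * s) - n\<bar> < 2 * (r + s) - 1" and "2 * (a * t - r * s) \<noteq> n"
proof -
  define \<delta> where "\<delta> = a * t - r * s"
  define P where "P = a * t + r * s"
  define K where "K = a * (b + c - a) + n"
  have a1: "1 \<le> a" using n0 na by linarith
  have ra: "a \<le> r" using D_pair_root_ge[OF na ab r r0] .
  have sa: "a \<le> s" using D_pair_root_ge[OF na _ s s0] ab bc by simp
  have tb: "b \<le> t" using D_pair_root_ge[OF _ bc t t0] na ab by simp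
  have \<delta>P: "\<delta> * P = - n * K"
  proof -
    have "\<delta> * P = a\<^sup>2 * t\<^sup>2 - r\<^sup>2 * s\<^sup>2"
      unfolding \<delta>_def P_def by (simp add: power2_eq_square algebra_simps)
    also have "\<dots> = - n * K"
      unfolding K_def r[symmetric] s[symmetric] t[symmetric] by (simp add: power2_eq_square algebra_simps)
    finally show ?thesis .
  qed
  have "0 \<le> a * (b - a)" and "c \<le> a * c" using a1 ab bc by simp_all
  then have K0: "0 < K" unfolding K_def using na ab bc by (simp add: algebra_simps)
  have "0 < a * t" and "0 \<le> r * s" using a1 tb ab r0 s0 by simp_all
  then have P0: "0 < P" unfolding P_def by simp
  have KL: "a * b + a * c + n = K + a * a" unfolding K_def by (simp add: algebra_simps)
  have "\<bar>n\<bar> * K < \<bar>n\<bar> * (K + a * a)" using n0 a1 by simp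
  also have "\<dots> \<le> a * (K + a * a)" using na K0 by (intro mult_right_mono) simp_all
  also have "\<dots> = a * (a * b) + a * s\<^sup>2" unfolding KL[symmetric] s[symmetric] by (simp add: algebra_simps)
  also have "\<dots> \<le> a * (s * t) + r * s\<^sup>2"
    using a1 ra s0 mult_mono[OF sa tb] ab by (intro add_mono mult_left_mono mult_right_mono) auto
  also have "\<dots> = s * P" unfolding P_def by (simp add: power2_eq_square algebra_simps)
  finally have "\<bar>n\<bar> * K < s * P" .
  moreover have "\<bar>\<delta>\<bar> * P = \<bar>n\<bar> * K"
    using arg_cong[OF \<delta>P, of abs] P0 K0 by (simp add: abs_mult)
  ultimately have "\<bar>\<delta>\<bar> * P < s * P" by simp
  then have "\<bar>\<delta>\<bar> \<le> s - 1" using P0 by (simp add: mult_less_cancel_right)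
  then show "\<bar>2 * (a * t - r * s) - n\<bar> < 2 * (r + s) - 1"
    using na ra r0 abs_triangle_ineq4[of "2 * \<delta>" n] unfolding \<delta>_def by simp
  show "2 * (a * t - r * s) \<noteq> n"
  proof
    assume n\<delta>: "2 * (a * t - r * s) = n"
    then have "\<delta> * P = \<delta> * (- 2 * K)" using \<delta>P unfolding \<delta>_def by simp
    moreover have "\<delta> \<noteq> 0" using n\<delta> n0 unfolding \<delta>_def by auto
    ultimately have "P = - 2 * K" by (rule mult_left_cancel[THEN iffD1, rotated])
    then show False using P0 K0 by simp
  qed
qed

lemma regular_extension_not_square:
  fixes n a b c r s t x :: int
  assumes "n \<noteq> 0" and "\<bar>n\<bar> \<le> a" and "a < b" and "b < c"
    and r: "a * b + n = r\<^sup>2" and s: "a * c + n = s\<^sup>2" and "b * c + n = t\<^sup>2"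
    and r0: "0 \<le> r" and s0: "0 \<le> s" and "0 \<le> t"
  shows "a * (b + c + 2 * t) + n \<noteq> x\<^sup>2"
proof
  assume x: "a * (b + c + 2 * t) + n = x\<^sup>2"
  define w where "w = 2 * (a * t - r * s) - n"
  have x_split: "x\<^sup>2 = (r + s)\<^sup>2 + w"
    using x r s unfolding w_def by (simp add: power2_eq_square algebra_simps)
  have "\<bar>w\<bar> < 2 * (r + s) - 1" and "w \<noteq> 0"
    using regular_extension_defect[OF assms] unfolding w_def by simp_all
  moreover have "(r + s - 1)\<^sup>2 = (r + s)\<^sup>2 - (2 * (r + s) - 1)"
    and "(r + s + 1)\<^sup>2 = (r + s)\<^sup>2 + (2 * (r + s) - 1) + 2"
    by (simp_all add: power2_eq_square algebra_simps)
  ultimately have "(r + s - 1)\<^sup>2 < x\<^sup>2" and "x\<^sup>2 < (r + s + 1)\<^sup>2" and "x\<^sup>2 \<noteq> (r + s)\<^sup>2"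
    using x_split unfolding abs_less_iff by linarith+
  moreover have "0 \<le> r + s" using r0 s0 by simp
  ultimately show False using square_between_consecutive_squares by blast
qed

lemma D_triple_product_identity:
  fixes n b c d t y z :: int
  assumes "b * c + n = t\<^sup>2" and "b * d + n = y\<^sup>2" and "c * d + n = z\<^sup>2"
  shows "(n * (b + c + d) + 2 * b * c * d)\<^sup>2 - 4 * (t * y * z)\<^sup>2
    = n\<^sup>2 * ((d - b - c)\<^sup>2 - 4 * (b * c + n))"
proof -
  have "(t * y * z)\<^sup>2 = (b * c + n) * (b * d + n) * (c * d + n)"
    using assms by (simp add: power_mult_distrib)
  then show ?thesis by (simp add: power2_eq_square algebra_simps)
qed

lemma D_triple_product_bound:
  fixes n b c d t y z :: int
  assumes nb: "n\<^sup>2 < b"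
    and t: "b * c + n = t\<^sup>2" and y: "b * d + n = y\<^sup>2" and z: "c * d + n = z\<^sup>2"
  shows "2 * (t * y * z) \<le> n * (b + c + d) + 2 * b * c * d"
proof -
  define e where "e = n * (b + c + d) + 2 * b * c * d - 2 * (t * y * z)"
  have "(b * z - t * y)\<^sup>2 = b\<^sup>2 * z\<^sup>2 - 2 * b * (t * y * z) + t\<^sup>2 * y\<^sup>2"
    by (simp add: power2_eq_square algebra_simps)
  also have "\<dots> = b * e + n\<^sup>2"
    unfolding e_def t[symmetric] y[symmetric] z[symmetric] by (simp add: power2_eq_square algebra_simps)
  finally have "0 \<le> b * e + n\<^sup>2" by (metis zero_le_power2)
  then have "b * -1 < b * e" using nb by linarith
  moreover have "0 < b" using nb zero_le_power2[of n] by linarith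
  ultimately have "-1 < e" by (simp only: mult_less_cancel_left_pos)
  then show ?thesis unfolding e_def by simp
qed

lemma D_triple_strict_product_bound:
  fixes n b c d t y z :: int
  assumes t: "b * c + n = t\<^sup>2" and y: "b * d + n = y\<^sup>2" and z: "c * d + n = z\<^sup>2"
    and "0 \<le> t" "0 \<le> y" "0 \<le> z"
    and less: "2 * (t * y * z) < n * (b + c + d) + 2 * b * c * d"
  shows "2 * (n * (b + c + d) + 2 * b * c * d) - 1 \<le> n\<^sup>2 * ((d - b - c)\<^sup>2 - 4 * (b * c + n))"
proof -
  define M where "M = n * (b + c + d) + 2 * b * c * d"
  have "(2 * (t * y * z))\<^sup>2 \<le> (M - 1)\<^sup>2"
    using less assms(4-6) unfolding M_def by (intro power_mono) simp_all
  then have "2 * M - 1 \<le> M\<^sup>2 - 4 * (t * y * z)\<^sup>2" by (simp add: power2_eq_square algebra_simps)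
  then show ?thesis using D_triple_product_identity[OF t y z] unfolding M_def by simp
qed

lemma gap_inequality_imp_bound:
  fixes n b c d :: int
  assumes b0: "0 < b" and bc: "b < c" and cd: "c < d" and bcn_pos: "0 < b * c + n"
    and gap: "2 * (n * (b + c + d) + 2 * b * c * d) - 1 \<le> n\<^sup>2 * ((d - b - c)\<^sup>2 - 4 * (b * c + n))"
  shows "4 * b * c * d \<le> n\<^sup>2 * d\<^sup>2 + 1"
proof -
  \<comment> \<open>\<open>(d - b - c)\<^sup>2 = d\<^sup>2 - uv\<close> and \<open>2(b + c + d) = 3u + v\<close>; the linear terms in \<open>n\<close> are
    absorbed using \<open>(u - 1)(v - 3) \<ge> 0\<close> and \<open>\<bar>n\<bar> \<le> n\<^sup>2\<close>.\<close>
  define u v where "u = b + c" and "v = 2 * d - b - c"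
  have u1: "1 \<le> u" and v3: "3 \<le> v" using b0 bc cd unfolding u_def v_def by simp_all
  note n_le = abs_le_power2_int[of n]
  have "0 \<le> (u - 1) * (v - 3)" using u1 v3 by simp
  then have "3 * u + v - 3 \<le> u * v" by (simp add: algebra_simps)
  then have uv: "\<bar>n\<bar> * (3 * u + v) - 3 * \<bar>n\<bar> \<le> n\<^sup>2 * (u * v)"
    using n_le mult_mono[of "\<bar>n\<bar>" "n\<^sup>2" "3 * u + v - 3" "u * v"] u1 v3
    by (simp add: algebra_simps)
  have bcn: "\<bar>n\<bar> \<le> n\<^sup>2 * (b * c + n)"
    using n_le mult_mono[of "\<bar>n\<bar>" "n\<^sup>2" 1 "b * c + n"] bcn_pos by simp
  have "\<bar>n * (3 * u + v)\<bar> = \<bar>n\<bar> * (3 * u + v)" using u1 v3 by (simp add: abs_mult)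
  then have sign: "- (n * (3 * u + v)) \<le> \<bar>n\<bar> * (3 * u + v)"
    using abs_ge_minus_self[of "n * (3 * u + v)"] by linarith
  have "2 * (n * (b + c + d) + 2 * b * c * d) - 1 = n * (3 * u + v) + 4 * b * c * d - 1"
    unfolding u_def v_def by (simp add: algebra_simps)
  moreover have "n\<^sup>2 * ((d - b - c)\<^sup>2 - 4 * (b * c + n))
      = n\<^sup>2 * d\<^sup>2 - n\<^sup>2 * (u * v) - 4 * (n\<^sup>2 * (b * c + n))"
    unfolding u_def v_def by (simp add: power2_eq_square algebra_simps)
  ultimately show ?thesis using gap uv bcn sign by linarith
qed

lemma D_triple_irregular_bound:
  fixes n b c d t y z :: int
  assumes n0: "n \<noteq> 0" and nb: "n\<^sup>2 < b" and bc: "b < c" and cd: "c < d"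
    and t: "b * c + n = t\<^sup>2" and y: "b * d + n = y\<^sup>2" and z: "c * d + n = z\<^sup>2"
    and t0: "0 \<le> t" and y0: "0 \<le> y" and z0: "0 \<le> z"
    and irregular: "d \<noteq> b + c + 2 * t"
  shows "4 * b * c * d \<le> n\<^sup>2 * d\<^sup>2 + 1"
proof -
  have b0: "0 < b" and "\<bar>n\<bar> \<le> b" using nb abs_le_power2_int[of n] by linarith+
  then have tb: "b \<le> t" using D_pair_root_ge[OF _ bc t t0] by simp
  have "2 * (t * y * z) \<noteq> n * (b + c + d) + 2 * b * c * d"
  proof
    assume eq: "2 * (t * y * z) = n * (b + c + d) + 2 * b * c * d"
    have "(n * (b + c + d) + 2 * b * c * d)\<^sup>2 = 4 * (t * y * z)\<^sup>2"
      unfolding eq[symmetric] by (simp add: power_mult_distrib)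
    then have "n\<^sup>2 * ((d - b - c)\<^sup>2 - 4 * (b * c + n)) = 0"
      using D_triple_product_identity[OF t y z] by simp
    then have "(d - b - c)\<^sup>2 = (2 * t)\<^sup>2" using n0 t by (simp add: power_mult_distrib)
    then have "d - b - c = 2 * t \<or> d - b - c = - (2 * t)" by (simp only: power2_eq_iff)
    then show False using irregular cd tb b0 by (elim disjE) linarith+
  qed
  then have "2 * (t * y * z) < n * (b + c + d) + 2 * b * c * d"
    using D_triple_product_bound[OF nb t y z] by simp
  moreover have "0 < b * c + n" using t tb b0 by simp
  ultimately show ?thesis
    using D_triple_strict_product_bound[OF t y z t0 y0 z0] gap_inequality_imp_bound[OF b0 bc cd]
    by simp
qed

lemma product_bound_imp_ratio_bound:
  fixes n b c d :: int
  assumes n0: "n \<noteq> 0" and b2: "2 \<le> b" and bc: "b < c" and cd: "c < d"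
    and bound: "4 * b * c * d \<le> n\<^sup>2 * d\<^sup>2 + 1"
  shows "real_of_int d > 3.847 * real_of_int b * real_of_int c / real_of_int n ^ 2"
proof -
  have "2 * 3 \<le> b * c" using b2 bc by (intro mult_mono) auto
  then have "2 * 3 * 4 \<le> b * c * d" using b2 bc cd by (intro mult_mono) auto
  then have "real_of_int 24 \<le> real_of_int (b * c * d)" by (simp only: of_int_le_iff)
  moreover have "real_of_int (4 * b * c * d) \<le> real_of_int (n\<^sup>2 * d\<^sup>2 + 1)"
    using bound by (simp only: of_int_le_iff)
  ultimately have "(3.847 * real_of_int b * real_of_int c) * real_of_int d
      < (real_of_int n ^ 2 * real_of_int d) * real_of_int d"
    by (simp add: power2_eq_square)
  then have "3.847 * real_of_int b * real_of_int c < real_of_int n ^ 2 * real_of_int d"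
    using b2 bc cd by (simp only: mult_less_cancel_right_pos of_int_pos)
  then show ?thesis using n0 by (simp add: divide_less_eq mult.commute)
qed

theorem lemma4:
  fixes n a b c d :: int
  assumes "n \<noteq> 0"
    and "has_D n {a, b, c, d}"
    and "\<bar>n\<bar>^3 \<le> a" and "a < b" and "b < c" and "c < d"
  shows "real_of_int d > 3.847 * real_of_int b * real_of_int c / real_of_int n ^ 2"
proof -
  note n0 = assms(1) and ab = assms(4) and bc = assms(5) and cd = assms(6)
  have "\<bar>n\<bar> ^ 2 \<le> \<bar>n\<bar> ^ 3" using n0 by (intro power_increasing) auto
  then have na: "\<bar>n\<bar> \<le> a" and nb: "n\<^sup>2 < b" using abs_le_power2_int[of n] assms(3) ab by simp_all
  have sq: "is_square (x * y + n)" if "x \<in> {a, b, c, d}" "y \<in> {a, b, c, d}" "x \<noteq> y" for x y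
    using assms(2) that unfolding has_D_def by blast
  obtain r where r: "a * b + n = r\<^sup>2" "0 \<le> r" using sq[of a b] ab by (auto elim: is_square_nonneg_root)
  obtain s where s: "a * c + n = s\<^sup>2" "0 \<le> s" using sq[of a c] ab bc by (auto elim: is_square_nonneg_root)
  obtain t where t: "b * c + n = t\<^sup>2" "0 \<le> t" using sq[of b c] bc by (auto elim: is_square_nonneg_root)
  obtain y where y: "b * d + n = y\<^sup>2" "0 \<le> y" using sq[of b d] bc cd by (auto elim: is_square_nonneg_root)
  obtain z where z: "c * d + n = z\<^sup>2" "0 \<le> z" using sq[of c d] cd by (auto elim: is_square_nonneg_root)
  obtain x where "a * d + n = x\<^sup>2" using sq[of a d] ab bc cd by (auto elim: is_square_nonneg_root)
  then have irregular: "d \<noteq> b + c + 2 * t"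
    using regular_extension_not_square[OF n0 na ab bc r(1) s(1) t(1) r(2) s(2) t(2)] by auto
  have b2: "2 \<le> b" using n0 nb zero_less_power2[of n] by linarith
  show ?thesis
    by (rule product_bound_imp_ratio_bound[OF n0 b2 bc cd
          D_triple_irregular_bound[OF n0 nb bc cd t(1) y(1) z(1) t(2) y(2) z(2) irregular]])
qed

end
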